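(* Let $H\in\mathbb H$ and assume that $$\lim_{r\to\infty}\operatorname{dist}_{L^1}\big(\rho_1\mathcal A_rH,\ \rho_1\mathcal C\big)=0,$$ where $\operatorname{dist}_{L^1}$ is the distance in $L^1((0,1),\mathbb C^{2\times2})$. Let $$K=\big\{\xi\in\overline{\mathbb C_+}:\ \rho_1\Theta(\xi)\in\operatorname{Cl}_{\|\cdot\|_1}(\rho_1\mathcal A_rH)\big\}.$$ Then (1) for every $T>0$: $\operatorname{Cl}_{\|\cdot\|_1}(\rho_T\mathcal A_rH)=\rho_T\Theta(K)$; and (2) $\operatorname{Cl}(\mathcal A_rH)=\Theta(K)$.
   Context: $\mathbb H$ is the set of measurable $H:(0,\infty)\to\mathbb R^{2\times2}$ with $H(t)\ge0$, $\operatorname{tr}H(t)=1$ a.e., up to a.e. equality, with topology $\mathcal T$: $H_n\to H$ iff $H_n|_{(0,T)}\to H|_{(0,T)}$ weakly in $L^1((0,T),\mathbb C^{2\times2})$ for all $T>0$. $\rho_T H=H|_{(0,T)}$. $(\mathcal A_rH)(t)=H(t/r)$. $\operatorname{Cl}(\mathcal A_rH)=\{\tilde H\in\mathbb H:\exists r_n\to\infty,\ \mathcal A_{r_n}H\to\tilde H\text{ in }\mathcal T\}$, while $\operatorname{Cl}_{\|\cdot\|_1}(\rho_T\mathcal A_rH)=\{G:\exists r_n\to\infty,\ \|\rho_T\mathcal A_{r_n}H-G\|_{L^1((0,T))}\to0\}$, the $L^1$-norm taken w.r.t. the entrywise $\ell^1$-norm on $\mathbb C^{2\times2}$. $\mathcal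 C\subseteq\mathbb H$ is the set of a.e. constant Hamiltonians. $\Theta:\overline{\mathbb C_+}\to\mathcal C$ (with $\overline{\mathbb C_+}=\mathbb C_+\cup\mathbb R\cup\{\infty\}$) is the bijection $\Theta(\zeta)=\frac{1}{|\zeta|^2+1}\begin{pmatrix}|\zeta|^2&\operatorname{Re}\zeta\\\operatorname{Re}\zeta&1\end{pmatrix}$ for $\zeta\ne\infty$, $\Theta(\infty)=\begin{pmatrix}1&0\\0&0\end{pmatrix}$ (as constant functions). *)

theory Defs
  imports "HOL-Analysis.Analysis"
begin

text \<open>2x2 real matrices as real^2^2; Hamiltonians are represented by
  (measurable) representatives of their a.e.-classes.\<close>

definition mtrace :: "real^2^2 \<Rightarrow> real" where
  "mtrace M = M$1$1 + M$2$2"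

definition psd :: "real^2^2 \<Rightarrow> bool" where
  "psd M \<longleftrightarrow> transpose M = M \<and> (\<forall>v::real^2. 0 \<le> v \<bullet> (M *v v))"

definition Ham :: "(real \<Rightarrow> real^2^2) set" where
  "Ham = {H. H \<in> borel_measurable lborel \<and>
              (AE t in lborel. 0 < t \<longrightarrow> psd (H t) \<and> mtrace (H t) = 1)}"

definition ConstHamVals :: "(real^2^2) set" where
  "ConstHamVals = {M. psd M \<and> mtrace M = 1}"

definition resc :: "real \<Rightarrow> (real \<Rightarrow> 'a) \<Rightarrow> real \<Rightarrow> 'a" where
  "resc r H t = H (t / r)"

definition cmat :: "real^2^2 \<Rightarrow> complex^2^2" where
  "cmat M = (\<chi> i j. complex_of_real (M$i$j))"

definition l1norm :: "complex^2^2 \<Rightarrow> real" where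
  "l1norm M = (\<Sum>i\<in>UNIV. \<Sum>j\<in>UNIV. cmod (M$i$j))"

definition L1dist :: "real \<Rightarrow> (real \<Rightarrow> real^2^2) \<Rightarrow> (real \<Rightarrow> complex^2^2) \<Rightarrow> real" where
  "L1dist T H G = (LINT t:{0<..<T}|lborel. l1norm (cmat (H t) - G t))"

definition weak_conv_on :: "real \<Rightarrow> (nat \<Rightarrow> real \<Rightarrow> real^2^2) \<Rightarrow> (real \<Rightarrow> real^2^2) \<Rightarrow> bool" where
  "weak_conv_on T Hs H \<longleftrightarrow>
     (\<forall>g::real \<Rightarrow> complex. g \<in> borel_measurable lborel \<and> bounded (range g) \<longrightarrow>
        (\<forall>i j. (\<lambda>n. LINT t:{0<..<T}|lborel. complex_of_real (Hs n t $i$j) * g t)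
                  \<longlonglongrightarrow> (LINT t:{0<..<T}|lborel. complex_of_real (H t $i$j) * g t)))"

definition T_conv :: "(nat \<Rightarrow> real \<Rightarrow> real^2^2) \<Rightarrow> (real \<Rightarrow> real^2^2) \<Rightarrow> bool" where
  "T_conv Hs H \<longleftrightarrow> (\<forall>T>0. weak_conv_on T Hs H)"

definition ClA :: "(real \<Rightarrow> real^2^2) \<Rightarrow> (real \<Rightarrow> real^2^2) set" where
  "ClA H = {G \<in> Ham. \<exists>r::nat \<Rightarrow> real. filterlim r at_top sequentially \<and>
                        T_conv (\<lambda>n. resc (r n) H) G}"

definition ClL1 :: "real \<Rightarrow> (real \<Rightarrow> real^2^2) \<Rightarrow> (real \<Rightarrow> complex^2^2) set" where
  "ClL1 T H = {G. set_integrable lborel {0<..<T} G \<and>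
      (\<exists>r::nat \<Rightarrow> real. filterlim r at_top sequentially \<and>
          (\<lambda>n. L1dist T (resc (r n) H) G) \<longlonglongrightarrow> 0)}"

definition distC :: "(real \<Rightarrow> real^2^2) \<Rightarrow> real \<Rightarrow> real" where
  "distC H r = (INF M\<in>ConstHamVals. L1dist 1 (resc r H) (\<lambda>_. cmat M))"

text \<open>Closed upper half plane with infinity: \<open>None\<close> is \<open>\<infinity>\<close>.\<close>
definition ClUHP :: "complex option set" where
  "ClUHP = {None} \<union> Some ` {z. 0 \<le> Im z}"

definition Theta :: "complex option \<Rightarrow> real^2^2" where
  "Theta \<xi> = (case \<xi> of
      None \<Rightarrow> (\<chi> i j. if i = 1 \<and> j = 1 then 1 else 0)
    | Some z \<Rightarrow> (\<chi> i j. (1 / ((cmod z)^2 + 1)) *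
         (if i = 1 \<and> j = 1 then (cmod z)^2
          else if i = 2 \<and> j = 2 then 1 else Re z)))"

end

theory Submission
  imports Defs
begin

text \<open>Rescaling time by \<open>T\<close> multiplies the L1 distance on \<open>(0, T)\<close> by \<open>T\<close>, so the hypothesis
  puts \<open>\<rho>\<^sub>T \<A>\<^sub>r H\<close> close to the compact set of constant Hamiltonians for every \<open>T\<close>.
  Along any sequence \<open>r\<^sub>n \<rightarrow> \<infinity>\<close> the near-best constants have a convergent subsequence, so
  along a subsequence \<open>\<rho>\<^sub>T \<A>\<^sub>r H\<close> converges in L1 to a constant \<open>M\<close>. Hence an L1 accumulation
  point equals \<open>M\<close> a.e. (L1 limits are unique), and a weak accumulation point equals \<open>M\<close> a.e.
  on \<open>(0, T)\<close> (L1 convergence implies weak convergence, and weak limits are unique); comparing on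
  \<open>(0, min T 1)\<close> shows that \<open>M\<close> does not depend on \<open>T\<close>. Conversely, L1 convergence to a constant
  on \<open>(0, 1)\<close> propagates to every \<open>(0, T)\<close>, because the near-best constants on \<open>(0, T)\<close> are
  also close to it on \<open>(0, min T 1)\<close>. Finally, \<open>\<Theta>\<close> maps the closed upper half-plane onto the
  constant Hamiltonians.\<close>

lemma l1norm_nonneg: "0 \<le> l1norm M"
  unfolding l1norm_def by (intro sum_nonneg) auto

lemma l1norm_triangle: "l1norm (a + b) \<le> l1norm a + l1norm b"
proof -
  have "l1norm (a + b) \<le> (\<Sum>i\<in>UNIV. \<Sum>j\<in>UNIV. cmod (a$i$j) + cmod (b$i$j))"
    unfolding l1norm_def by (intro sum_mono) (simp add: norm_triangle_ineq)
  also have "\<dots> = l1norm a + l1norm b"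
    unfolding l1norm_def by (simp add: sum.distrib)
  finally show ?thesis .
qed

lemma l1norm_minus_commute: "l1norm (a - b) = l1norm (b - a)"
  unfolding l1norm_def by (simp add: norm_minus_commute)

lemma l1norm_triangle_diff: "l1norm (a - c) \<le> l1norm (a - b) + l1norm (b - c)"
  using l1norm_triangle[of "a - b" "b - c"] by simp

lemma norm_nth_nth_le_l1norm: "cmod (M$i$j) \<le> l1norm M"
proof -
  have "cmod (M$i$j) \<le> (\<Sum>j\<in>UNIV. cmod (M$i$j))"
    by (rule member_le_sum) auto
  also have "\<dots> \<le> l1norm M"
    unfolding l1norm_def by (rule member_le_sum) (auto intro: sum_nonneg)
  finally show ?thesis .
qed

lemma norm_le_l1norm: "norm M \<le> l1norm M"
proof -
  have "norm M \<le> (\<Sum>i\<in>UNIV. norm (M$i))"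
    unfolding norm_vec_def by (rule L2_set_le_sum) auto
  also have "\<dots> \<le> l1norm M"
    unfolding l1norm_def by (intro sum_mono) (auto simp: norm_vec_def intro: L2_set_le_sum)
  finally show ?thesis .
qed

lemma l1norm_le_norm: "l1norm M \<le> 4 * norm M"
proof -
  have "l1norm M \<le> (\<Sum>i\<in>(UNIV::2 set). \<Sum>j\<in>(UNIV::2 set). norm M)"
    unfolding l1norm_def by (intro sum_mono) (rule order_trans[OF Finite_Cartesian_Product.norm_nth_le Finite_Cartesian_Product.norm_nth_le])
  then show ?thesis by simp
qed

lemma l1norm_eq_0_iff: "l1norm M = 0 \<longleftrightarrow> M = 0"
  using norm_le_l1norm[of M] by (auto simp: l1norm_def)

lemma continuous_on_l1norm: "continuous_on UNIV l1norm"
  unfolding l1norm_def[abs_def] by (intro continuous_intros)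

lemma tendsto_l1norm [tendsto_intros]: "(f \<longlongrightarrow> a) F \<Longrightarrow> ((\<lambda>x. l1norm (f x)) \<longlongrightarrow> l1norm a) F"
  using continuous_on_tendsto_compose[OF continuous_on_l1norm] by auto

lemma borel_measurable_l1norm [measurable]:
  "f \<in> borel_measurable M \<Longrightarrow> (\<lambda>x. l1norm (f x)) \<in> borel_measurable M"
  by (erule measurable_compose[OF _ borel_measurable_continuous_onI[OF continuous_on_l1norm]])

lemma norm_nth_nth_cmat: "cmod (cmat M $ i $ j) = \<bar>M $ i $ j\<bar>"
  by (simp add: cmat_def)

lemma l1norm_cmat: "l1norm (cmat M) = (\<Sum>i\<in>UNIV. \<Sum>j\<in>UNIV. \<bar>M$i$j\<bar>)"
  unfolding l1norm_def by (simp add: norm_nth_nth_cmat)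

lemma continuous_on_cmat: "continuous_on UNIV cmat"
  unfolding cmat_def by (intro continuous_intros)

lemma tendsto_cmat [tendsto_intros]: "(f \<longlongrightarrow> a) F \<Longrightarrow> ((\<lambda>x. cmat (f x)) \<longlongrightarrow> cmat a) F"
  using continuous_on_tendsto_compose[OF continuous_on_cmat] by auto

lemma borel_measurable_cmat [measurable]:
  "f \<in> borel_measurable M \<Longrightarrow> (\<lambda>x. cmat (f x)) \<in> borel_measurable M"
  by (erule measurable_compose[OF _ borel_measurable_continuous_onI[OF continuous_on_cmat]])

lemma borel_measurable_vec_nth [measurable]:
  fixes f :: "'c \<Rightarrow> 'a::topological_space^'b"
  assumes "f \<in> borel_measurable M"
  shows "(\<lambda>x. f x $ i) \<in> borel_measurable M"
  using assms by (rule measurable_compose[OF _ borel_measurable_continuous_onI])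
    (intro continuous_intros)

section \<open>Constant Hamiltonians\<close>

lemma inner_matrix_vector_2:
  "(v::real^2) \<bullet> (M *v v) = v$1 * (M$1$1 * v$1 + M$1$2 * v$2) + v$2 * (M$2$1 * v$1 + M$2$2 * v$2)"
  by (simp add: inner_vec_def matrix_vector_mult_def sum_2)

lemma transpose_eq_iff_2: "transpose (M::real^2^2) = M \<longleftrightarrow> M$1$2 = M$2$1"
  by (auto simp: transpose_def vec_eq_iff forall_2)

lemma quadratic_form_nonneg:
  fixes a b d x y :: real
  assumes "0 \<le> a" "0 \<le> d" "b\<^sup>2 \<le> a * d"
  shows "0 \<le> a * x\<^sup>2 + 2 * b * x * y + d * y\<^sup>2"
proof (cases "a = 0")
  case True
  then show ?thesis using assms by simp
next
  case False
  have "a * (a * x\<^sup>2 + 2 * b * x * y + d * y\<^sup>2) = (a * x + b * y)\<^sup>2 + (a * d - b\<^sup>2) * y\<^sup>2"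
    by (simp add: algebra_simps power2_eq_square)
  also have "\<dots> \<ge> 0" using assms by simp
  finally show ?thesis using False assms(1) by (simp add: zero_le_mult_iff)
qed

lemma ConstHamVals_iff: "M \<in> ConstHamVals \<longleftrightarrow>
   M$1$2 = M$2$1 \<and> 0 \<le> M$1$1 \<and> 0 \<le> M$2$2 \<and> M$1$1 + M$2$2 = 1 \<and> (M$1$2)\<^sup>2 \<le> M$1$1 * M$2$2"
  (is "?L \<longleftrightarrow> ?R")
proof
  assume ?L
  then have sym: "M$1$2 = M$2$1" and tr: "M$1$1 + M$2$2 = 1" and q: "\<And>v. 0 \<le> v \<bullet> (M *v v)"
    by (auto simp: ConstHamVals_def psd_def transpose_eq_iff_2 mtrace_def)
  have Q: "0 \<le> x * (M$1$1 * x + M$1$2 * y) + y * (M$2$1 * x + M$2$2 * y)" for x y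
    using q[of "vector [x, y]"] by (simp add: inner_matrix_vector_2)
  have a: "0 \<le> M$1$1" and d: "0 \<le> M$2$2" using Q[of 1 0] Q[of 0 1] by simp_all
  have "0 \<le> M$1$1 * (M$1$1 * M$2$2 - (M$1$2)\<^sup>2)" "0 \<le> M$2$2 * (M$1$1 * M$2$2 - (M$1$2)\<^sup>2)"
    using Q[of "M$1$2" "- M$1$1"] Q[of "M$2$2" "- M$1$2"] sym
    by (simp_all add: algebra_simps power2_eq_square)
  moreover have "0 < M$1$1 \<or> 0 < M$2$2" using a d tr by linarith
  ultimately have "(M$1$2)\<^sup>2 \<le> M$1$1 * M$2$2" by (auto simp: zero_le_mult_iff)
  then show ?R using sym tr a d by simp
next
  assume R: ?R
  have "0 \<le> v \<bullet> (M *v v)" for v :: "real^2"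
  proof -
    have "0 \<le> M$1$1 * (v$1)\<^sup>2 + 2 * M$1$2 * v$1 * v$2 + M$2$2 * (v$2)\<^sup>2"
      using R by (intro quadratic_form_nonneg) auto
    then show ?thesis using R by (simp add: inner_matrix_vector_2 algebra_simps power2_eq_square)
  qed
  then show ?L using R by (simp add: ConstHamVals_def psd_def transpose_eq_iff_2 mtrace_def)
qed

lemma ConstHamVals_entry_bound: "M \<in> ConstHamVals \<Longrightarrow> \<bar>M$i$j\<bar> \<le> 1"
proof -
  assume "M \<in> ConstHamVals"
  then have R: "M$1$2 = M$2$1" "0 \<le> M$1$1" "0 \<le> M$2$2" "M$1$1 + M$2$2 = 1"
    "(M$1$2)\<^sup>2 \<le> M$1$1 * M$2$2"
    by (auto simp: ConstHamVals_iff)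
  have "M$1$1 * M$2$2 \<le> 1 * 1" using R by (intro mult_mono) auto
  then have "(M$1$2)\<^sup>2 \<le> 1" using R(5) by simp
  then have "\<bar>M$1$2\<bar> \<le> 1" by (simp add: abs_square_le_1)
  then show ?thesis using R exhaust_2[of i] exhaust_2[of j] by auto
qed

lemma l1norm_cmat_le_4: "M \<in> ConstHamVals \<Longrightarrow> l1norm (cmat M) \<le> 4"
proof -
  assume "M \<in> ConstHamVals"
  then have "(\<Sum>i\<in>UNIV. \<Sum>j\<in>UNIV. \<bar>M$i$j\<bar>) \<le> (\<Sum>i\<in>(UNIV::2 set). \<Sum>j\<in>(UNIV::2 set). 1::real)"
    by (intro sum_mono ConstHamVals_entry_bound)
  then show ?thesis by (simp add: l1norm_cmat)
qed

lemma compact_ConstHamVals: "compact ConstHamVals"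
  unfolding compact_eq_bounded_closed
proof
  show "bounded ConstHamVals"
    unfolding bounded_iff
  proof (intro exI ballI)
    fix M assume "M \<in> ConstHamVals"
    then have "norm (cmat M) \<le> 4" using l1norm_cmat_le_4 norm_le_l1norm order_trans by blast
    moreover have "norm M \<le> norm (cmat M)"
      unfolding norm_vec_def cmat_def by (simp add: vector_def)
    ultimately show "norm M \<le> 4" by simp
  qed
  have e: "ConstHamVals = {M. M$1$2 = M$2$1} \<inter> {M. 0 \<le> M$1$1} \<inter> {M. 0 \<le> M$2$2} \<inter>
      {M. M$1$1 + M$2$2 = 1} \<inter> {M. (M$1$2)\<^sup>2 \<le> M$1$1 * M$2$2}"
    by (auto simp: ConstHamVals_iff)
  show "closed ConstHamVals"
    unfolding e by (intro closed_Int closed_Collect_eq closed_Collect_le continuous_intros)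
qed

lemma Theta_in_ConstHamVals: "Theta \<xi> \<in> ConstHamVals"
proof (cases \<xi>)
  case None
  then show ?thesis by (simp add: ConstHamVals_iff Theta_def)
next
  case (Some z)
  define n where "n = (cmod z)\<^sup>2 + 1"
  have n: "0 < n" unfolding n_def by (simp add: add_nonneg_pos)
  have "(Re z)\<^sup>2 \<le> (cmod z)\<^sup>2" by (simp add: cmod_power2)
  then have "(Re z / n)\<^sup>2 \<le> (cmod z)\<^sup>2 / n * (1 / n)"
    by (simp add: power_divide divide_right_mono power2_eq_square)
  moreover have "(cmod z)\<^sup>2 / n + 1 / n = 1" using n by (simp add: n_def field_simps)
  ultimately show ?thesis
    using n by (simp add: ConstHamVals_iff Theta_def Some n_def[symmetric])
qed

lemma Theta_image: "Theta ` ClUHP = ConstHamVals"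
proof (intro antisym subsetI)
  fix M assume "M \<in> ConstHamVals"
  then have R: "M$1$2 = M$2$1" "0 \<le> M$1$1" "0 \<le> M$2$2" "M$1$1 + M$2$2 = 1"
    "(M$1$2)\<^sup>2 \<le> M$1$1 * M$2$2"
    by (auto simp: ConstHamVals_iff)
  show "M \<in> Theta ` ClUHP"
  proof (cases "M$2$2 = 0")
    case True
    then have "Theta None = M" using R by (auto simp: Theta_def vec_eq_iff forall_2)
    then show ?thesis by (force simp: ClUHP_def)
  next
    case False
    let ?a = "M$1$1" and ?b = "M$1$2" and ?d = "M$2$2"
    have d: "0 < ?d" using False R by simp
    define w where "w = (?a * ?d - ?b\<^sup>2) / ?d\<^sup>2"
    have w: "0 \<le> w" using R unfolding w_def by simp
    \<comment> \<open>\<open>\<Theta>(\<zeta>) = M\<close> forces \<open>Re \<zeta> = b/d\<close> and \<open>|\<zeta>|\<^sup>2 = a/d\<close>\<close>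
    define z where "z = Complex (?b / ?d) (sqrt w)"
    have cz: "(cmod z)\<^sup>2 = ?a / ?d"
      using w d unfolding z_def cmod_power2 w_def by (simp add: field_simps power2_eq_square)
    have "?a / ?d + 1 = 1 / ?d" using d R(4) by (simp add: field_simps)
    then have den: "1 / ((cmod z)\<^sup>2 + 1) = ?d" unfolding cz by simp
    have "Theta (Some z) = M"
      using den cz d R(1) by (simp add: Theta_def vec_eq_iff forall_2 z_def)
    moreover have "Some z \<in> ClUHP" using w unfolding ClUHP_def z_def by auto
    ultimately show ?thesis by blast
  qed
qed (auto intro: Theta_in_ConstHamVals)

lemma Ham_iff: "H \<in> Ham \<longleftrightarrow>
    H \<in> borel_measurable lborel \<and> (AE t in lborel. 0 < t \<longrightarrow> H t \<in> ConstHamVals)"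
  unfolding Ham_def ConstHamVals_def by auto

lemma borel_measurable_Ham: "F \<in> Ham \<Longrightarrow> F \<in> borel_measurable lborel"
  by (simp add: Ham_iff)

lemma const_Ham: "M \<in> ConstHamVals \<Longrightarrow> (\<lambda>_. M) \<in> Ham"
  by (simp add: Ham_iff)

lemma borel_measurable_resc:
  "H \<in> borel_measurable lborel \<Longrightarrow> resc r H \<in> borel_measurable lborel"
  unfolding resc_def by (intro measurable_compose[where f = "\<lambda>t. t / r" and g = H]) auto

lemma resc_Ham:
  assumes H: "H \<in> Ham" and r: "0 < r"
  shows "resc r H \<in> Ham"
proof -
  have [measurable]: "H \<in> borel_measurable borel" "ConstHamVals \<in> sets borel"
    using H compact_ConstHamVals by (auto simp: Ham_iff intro: borel_closed compact_imp_closed)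
  have "AE t in lborel. 0 < t \<longrightarrow> H t \<in> ConstHamVals" using H by (simp add: Ham_iff)
  then have "AE t in lborel. 0 < 0 + (1 / r) * t \<longrightarrow> H (0 + (1 / r) * t) \<in> ConstHamVals"
    using r by (intro AE_borel_affine) auto
  then have "AE t in lborel. 0 < t \<longrightarrow> resc r H t \<in> ConstHamVals"
    by eventually_elim (use r in \<open>simp add: resc_def zero_less_divide_iff\<close>)
  then show ?thesis using borel_measurable_resc[OF borel_measurable_Ham[OF H]] by (simp add: Ham_iff)
qed

lemma eventually_resc_Ham:
  assumes H: "H \<in> Ham" and r: "filterlim r at_top sequentially"
  shows "eventually (\<lambda>n. resc (r n) H \<in> Ham) sequentially"
proof -
  have "eventually (\<lambda>n. 0 < r n) sequentially"
    using r by (rule eventually_compose_filterlim[OF eventually_gt_at_top])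
  then show ?thesis by (rule eventually_mono) (rule resc_Ham[OF H])
qed

lemma set_integrable_Ioo_bounded:
  fixes F :: "real \<Rightarrow> 'b::{banach, second_countable_topology}"
  assumes "F \<in> borel_measurable lborel" "AE t in lborel. t \<in> {a<..<b} \<longrightarrow> norm (F t) \<le> B"
  shows "set_integrable lborel {a<..<b} F"
proof -
  have "emeasure lborel {a<..<b} < \<infinity>" by (rule emeasure_bounded_finite) simp
  then show ?thesis
    unfolding set_integrable_def using assms by (intro integrableI_bounded_set_indicator) auto
qed

lemma set_integrable_Ioo_const:
  "set_integrable lborel {a<..<b::real} (\<lambda>_. c::'b::{banach, second_countable_topology})"
  by (rule set_integrable_Ioo_bounded[where B = "norm c"]) simp_all

lemma set_integrable_cmat_Ham:
  assumes "F \<in> Ham"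
  shows "set_integrable lborel {0<..<T} (\<lambda>t. cmat (F t))"
proof (rule set_integrable_Ioo_bounded[where B = 4])
  show "AE t in lborel. t \<in> {0<..<T} \<longrightarrow> norm (cmat (F t)) \<le> 4"
    using assms unfolding Ham_iff
    by (auto elim!: eventually_mono intro: order_trans[OF norm_le_l1norm l1norm_cmat_le_4])
qed (use borel_measurable_Ham[OF assms] in measurable)

lemma set_integrable_Ham_entry:
  assumes "F \<in> Ham"
  shows "set_integrable lborel {0<..<T} (\<lambda>t. F t $ i $ j)"
proof (rule set_integrable_Ioo_bounded[where B = 1])
  show "AE t in lborel. t \<in> {0<..<T} \<longrightarrow> norm (F t $ i $ j) \<le> 1"
    using assms unfolding Ham_iff by (auto elim!: eventually_mono intro: ConstHamVals_entry_bound)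
qed (use borel_measurable_Ham[OF assms] in measurable)

lemma set_integrable_Ham_entry_mult:
  assumes F: "F \<in> Ham" and g: "g \<in> borel_measurable lborel" "\<And>t. norm (g t) \<le> B"
  shows "set_integrable lborel {0<..<T} (\<lambda>t. complex_of_real (F t $ i $ j) * g t)"
proof (rule set_integrable_Ioo_bounded[where B = B])
  show "AE t in lborel. t \<in> {0<..<T} \<longrightarrow> norm (complex_of_real (F t $ i $ j) * g t) \<le> B"
    using F unfolding Ham_iff
  proof (elim conjE eventually_mono, intro impI)
    fix t assume "0 < t \<longrightarrow> F t \<in> ConstHamVals" "t \<in> {0<..<T}"
    then have "\<bar>F t $ i $ j\<bar> \<le> 1" by (auto intro: ConstHamVals_entry_bound)
    then show "norm (complex_of_real (F t $ i $ j) * g t) \<le> B"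
      using mult_mono[of "\<bar>F t $ i $ j\<bar>" 1 "norm (g t)" B] g(2)[of t] by (simp add: norm_mult)
  qed
qed (use borel_measurable_Ham[OF F] g(1) in measurable)

lemma set_integrable_l1norm:
  fixes F :: "'a \<Rightarrow> complex^2^2"
  assumes "set_integrable M A F"
  shows "set_integrable M A (\<lambda>t. l1norm (F t))"
proof (rule set_integrable_bound)
  show "set_integrable M A (\<lambda>t. 4 *\<^sub>R F t)" using assms by simp
  have "(\<lambda>t. indicator A t *\<^sub>R F t) \<in> borel_measurable M"
    using assms unfolding set_integrable_def by (rule borel_measurable_integrable)
  then have "(\<lambda>t. l1norm (indicator A t *\<^sub>R F t)) \<in> borel_measurable M" by measurable
  moreover have "l1norm (indicator A t *\<^sub>R F t) = indicator A t *\<^sub>R l1norm (F t)" for t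
    by (simp add: indicator_def l1norm_def)
  ultimately show "set_borel_measurable M A (\<lambda>t. l1norm (F t))"
    unfolding set_borel_measurable_def by simp
  show "AE t in M. t \<in> A \<longrightarrow> norm (l1norm (F t)) \<le> norm (4 *\<^sub>R F t)"
    using l1norm_le_norm l1norm_nonneg by simp
qed

lemma set_integral_nonneg_eq_0_imp_AE:
  fixes f :: "'a \<Rightarrow> real"
  assumes "set_integrable M A f" "\<And>x. 0 \<le> f x" "(LINT x:A|M. f x) = 0"
  shows "AE x in M. x \<in> A \<longrightarrow> f x = 0"
proof -
  have "AE x in M. indicator A x * f x = 0"
    using assms integral_nonneg_eq_0_iff_AE[of M "\<lambda>x. indicator A x * f x"]
    unfolding set_integrable_def set_lebesgue_integral_def by simp
  then show ?thesis by eventually_elim (simp add: indicator_def)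
qed

lemma set_integral_l1norm_triangle:
  fixes F G H :: "'a \<Rightarrow> complex^2^2"
  assumes "set_integrable M A F" "set_integrable M A G" "set_integrable M A H"
  shows "(LINT x:A|M. l1norm (F x - H x)) \<le>
    (LINT x:A|M. l1norm (F x - G x)) + (LINT x:A|M. l1norm (G x - H x))"
proof -
  have FG: "set_integrable M A (\<lambda>x. l1norm (F x - G x))"
    and GH: "set_integrable M A (\<lambda>x. l1norm (G x - H x))"
    and FH: "set_integrable M A (\<lambda>x. l1norm (F x - H x))"
    using assms by (auto intro!: set_integrable_l1norm set_integral_diff(1))
  have "(LINT x:A|M. l1norm (F x - H x)) \<le> (LINT x:A|M. l1norm (F x - G x) + l1norm (G x - H x))"
    using FG GH FH by (intro set_integral_mono set_integral_add(1)) (auto intro: l1norm_triangle_diff)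
  also have "\<dots> = (LINT x:A|M. l1norm (F x - G x)) + (LINT x:A|M. l1norm (G x - H x))"
    using FG GH by (rule set_integral_add(2))
  finally show ?thesis .
qed

lemma L1dist_nonneg: "0 \<le> L1dist T F G"
  unfolding L1dist_def set_lebesgue_integral_def
  by (intro integral_nonneg_AE AE_I2) (auto simp: l1norm_nonneg indicator_def)

lemma set_integrable_L1dist:
  assumes "F \<in> Ham" "set_integrable lborel {0<..<T} G"
  shows "set_integrable lborel {0<..<T} (\<lambda>t. l1norm (cmat (F t) - G t))"
  using assms by (intro set_integrable_l1norm set_integral_diff(1) set_integrable_cmat_Ham)

lemma L1dist_triangle:
  assumes "F \<in> Ham" "set_integrable lborel {0<..<T} G1" "set_integrable lborel {0<..<T} G2"
  shows "(LINT t:{0<..<T}|lborel. l1norm (G1 t - G2 t)) \<le> L1dist T F G1 + L1dist T F G2"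
  using set_integral_l1norm_triangle[OF assms(2) set_integrable_cmat_Ham[OF assms(1)] assms(3)]
  unfolding L1dist_def l1norm_minus_commute[of "G1 _"] .

lemma L1dist_const_triangle:
  assumes "F \<in> Ham" "0 \<le> T"
  shows "T * l1norm (c - d) \<le> L1dist T F (\<lambda>_. c) + L1dist T F (\<lambda>_. d)"
proof -
  have "(LINT t:{0<..<T}|lborel. l1norm (c - d)) \<le> L1dist T F (\<lambda>_. c) + L1dist T F (\<lambda>_. d)"
    by (rule L1dist_triangle[OF assms(1)]) (rule set_integrable_Ioo_const)+
  then show ?thesis using assms(2) by (simp add: set_integral_const)
qed

lemma L1dist_const_transfer:
  assumes "F \<in> Ham" "0 \<le> T"
  shows "L1dist T F (\<lambda>_. d) \<le> L1dist T F (\<lambda>_. c) + T * l1norm (c - d)"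
proof -
  have "L1dist T F (\<lambda>_. d) \<le> L1dist T F (\<lambda>_. c) + (LINT t:{0<..<T}|lborel. l1norm (c - d))"
    unfolding L1dist_def
    by (rule set_integral_l1norm_triangle[OF set_integrable_cmat_Ham[OF assms(1)]])
      (rule set_integrable_Ioo_const)+
  then show ?thesis using assms(2) by (simp add: set_integral_const)
qed

lemma L1dist_mono_interval:
  assumes "F \<in> Ham" "set_integrable lborel {0<..<T} G" "S \<le> T"
  shows "L1dist S F G \<le> L1dist T F G"
proof -
  have i: "set_integrable lborel {0<..<T} (\<lambda>t. l1norm (cmat (F t) - G t))"
    using assms(1,2) by (rule set_integrable_L1dist)
  moreover have "set_integrable lborel {0<..<S} (\<lambda>t. l1norm (cmat (F t) - G t))"
    by (rule set_integrable_subset[OF i]) (use assms(3) in auto)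
  ultimately show ?thesis
    unfolding L1dist_def set_lebesgue_integral_def set_integrable_def
    using assms(3) by (intro integral_mono) (auto simp: indicator_def l1norm_nonneg)
qed

lemma L1dist_cong_AE:
  assumes "F \<in> Ham" "set_integrable lborel {0<..<T} G" "set_integrable lborel {0<..<T} G'"
    and "AE t in lborel. t \<in> {0<..<T} \<longrightarrow> G t = G' t"
  shows "L1dist T F G = L1dist T F G'"
  using set_integrable_L1dist[OF assms(1,2)] set_integrable_L1dist[OF assms(1,3)] assms(4)
  unfolding L1dist_def set_lebesgue_integral_def set_integrable_def
  by (intro integral_cong_AE) (auto dest: borel_measurable_integrable elim!: eventually_mono
      split: split_indicator)

lemma L1dist_resc_mult:
  assumes "0 < T"
  shows "L1dist T (resc (T * r) F) (\<lambda>_. c) = T * L1dist 1 (resc r F) (\<lambda>_. c)"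
proof -
  let ?f = "\<lambda>t. indicator {0<..<T} t *\<^sub>R l1norm (cmat (F (t / (T * r))) - c)"
  have "L1dist T (resc (T * r) F) (\<lambda>_. c) = (\<integral>t. ?f t \<partial>lborel)"
    unfolding L1dist_def set_lebesgue_integral_def resc_def ..
  also have "\<dots> = \<bar>T\<bar> *\<^sub>R (\<integral>x. ?f (0 + T * x) \<partial>lborel)"
    by (rule lborel_integral_real_affine) (use assms in simp)
  also have "(\<lambda>x. ?f (0 + T * x)) = (\<lambda>x. indicator {0<..<1} x *\<^sub>R l1norm (cmat (F (x / r)) - c))"
    using assms by (auto simp: indicator_def zero_less_mult_iff fun_eq_iff)
  finally show ?thesis
    using assms unfolding L1dist_def set_lebesgue_integral_def resc_def by simp
qed

lemma L1dist_limits_AE_eq: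
  assumes F: "eventually (\<lambda>n. F n \<in> Ham) sequentially"
    and G1: "set_integrable lborel {0<..<T} G1" and G2: "set_integrable lborel {0<..<T} G2"
    and lim1: "(\<lambda>n. L1dist T (F n) G1) \<longlonglongrightarrow> 0" and lim2: "(\<lambda>n. L1dist T (F n) G2) \<longlonglongrightarrow> 0"
  shows "AE t in lborel. t \<in> {0<..<T} \<longrightarrow> G1 t = G2 t"
proof -
  let ?I = "LINT t:{0<..<T}|lborel. l1norm (G1 t - G2 t)"
  have "?I \<le> 0 + 0"
    using F by (intro tendsto_le[OF _ tendsto_add[OF lim1 lim2] tendsto_const])
      (auto elim!: eventually_mono intro: L1dist_triangle[OF _ G1 G2])
  moreover have "0 \<le> ?I"
    unfolding set_lebesgue_integral_def
    by (intro integral_nonneg_AE AE_I2) (auto simp: l1norm_nonneg indicator_def)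
  ultimately have "AE t in lborel. t \<in> {0<..<T} \<longrightarrow> l1norm (G1 t - G2 t) = 0"
    using G1 G2 by (intro set_integral_nonneg_eq_0_imp_AE set_integrable_l1norm set_integral_diff(1))
      (auto simp: l1norm_nonneg)
  then show ?thesis by eventually_elim (simp add: l1norm_eq_0_iff)
qed

lemma L1dist_const_tendsto_0_mono_interval:
  assumes F: "eventually (\<lambda>n. F n \<in> Ham) sequentially" and "S \<le> T"
    and lim: "(\<lambda>n. L1dist T (F n) (\<lambda>_. a n)) \<longlonglongrightarrow> 0"
  shows "(\<lambda>n. L1dist S (F n) (\<lambda>_. a n)) \<longlonglongrightarrow> 0"
proof (rule Lim_null_comparison[OF _ lim])
  show "eventually (\<lambda>n. norm (L1dist S (F n) (\<lambda>_. a n)) \<le> L1dist T (F n) (\<lambda>_. a n)) sequentially"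
    using F by (rule eventually_mono)
      (use assms(2) in \<open>simp add: L1dist_nonneg L1dist_mono_interval set_integrable_Ioo_const\<close>)
qed

lemma L1dist_const_tendsto_0_transfer:
  assumes F: "eventually (\<lambda>n. F n \<in> Ham) sequentially" and T: "0 \<le> T"
    and lim: "(\<lambda>n. L1dist T (F n) (\<lambda>_. a n)) \<longlonglongrightarrow> 0" and close: "(\<lambda>n. l1norm (a n - c)) \<longlonglongrightarrow> 0"
  shows "(\<lambda>n. L1dist T (F n) (\<lambda>_. c)) \<longlonglongrightarrow> 0"
proof (rule Lim_null_comparison)
  show "eventually (\<lambda>n. norm (L1dist T (F n) (\<lambda>_. c)) \<le> L1dist T (F n) (\<lambda>_. a n) + T * l1norm (a n - c))
      sequentially"
    using F by (rule eventually_mono) (use T in \<open>simp add: L1dist_nonneg L1dist_const_transfer\<close>)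
  show "(\<lambda>n. L1dist T (F n) (\<lambda>_. a n) + T * l1norm (a n - c)) \<longlonglongrightarrow> 0"
    using lim tendsto_mult_right_zero[OF close] by (rule tendsto_add_zero)
qed

lemma l1norm_diff_tendsto_0_if_L1dist_tendsto_0:
  assumes F: "eventually (\<lambda>n. F n \<in> Ham) sequentially" and T: "0 < T"
    and lim_a: "(\<lambda>n. L1dist T (F n) (\<lambda>_. a n)) \<longlonglongrightarrow> 0" and lim_c: "(\<lambda>n. L1dist T (F n) (\<lambda>_. c)) \<longlonglongrightarrow> 0"
  shows "(\<lambda>n. l1norm (a n - c)) \<longlonglongrightarrow> 0"
proof (rule Lim_null_comparison)
  show "eventually (\<lambda>n. norm (l1norm (a n - c)) \<le> (L1dist T (F n) (\<lambda>_. a n) + L1dist T (F n) (\<lambda>_. c)) / T)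
      sequentially"
    using F by (rule eventually_mono)
      (use T L1dist_const_triangle in \<open>simp add: l1norm_nonneg pos_le_divide_eq mult.commute\<close>)
  show "(\<lambda>n. (L1dist T (F n) (\<lambda>_. a n) + L1dist T (F n) (\<lambda>_. c)) / T) \<longlonglongrightarrow> 0"
    using tendsto_add_zero[OF lim_a lim_c] by (rule tendsto_divide_zero)
qed

section \<open>Rescalings close to constants\<close>

lemma L1_close_constants:
  assumes dist: "(distC H \<longlongrightarrow> 0) at_top" and T: "0 < T" and r: "filterlim r at_top sequentially"
  obtains M where "\<And>n. M n \<in> ConstHamVals"
    "(\<lambda>n. L1dist T (resc (r n) H) (\<lambda>_. cmat (M n))) \<longlonglongrightarrow> 0"
proof -
  have "filterlim (\<lambda>n. r n / T) at_top sequentially"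
    using filterlim_at_top_mult_tendsto_pos[OF tendsto_const _ r, of "inverse T"] T
    by (simp add: divide_inverse)
  then have dist_r: "(\<lambda>n. distC H (r n / T)) \<longlonglongrightarrow> 0" by (rule filterlim_compose[OF dist])
  have bdd: "bdd_below ((\<lambda>M. L1dist 1 (resc x H) (\<lambda>_. cmat M)) ` ConstHamVals)" for x
    by (rule bdd_belowI[where m = 0]) (auto simp: L1dist_nonneg)
  have "\<exists>M\<in>ConstHamVals. L1dist 1 (resc (r n / T) H) (\<lambda>_. cmat M) < distC H (r n / T) + 1 / Suc n"
    for n
  proof -
    have "distC H (r n / T) < distC H (r n / T) + 1 / Suc n" by simp
    then show ?thesis unfolding distC_def using cINF_less_iff[OF _ bdd] Theta_in_ConstHamVals by blast
  qed
  then obtain M where M: "\<And>n. M n \<in> ConstHamVals"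
    "\<And>n. L1dist 1 (resc (r n / T) H) (\<lambda>_. cmat (M n)) < distC H (r n / T) + 1 / Suc n"
    by metis
  have "L1dist T (resc (r n) H) (\<lambda>_. cmat (M n)) = T * L1dist 1 (resc (r n / T) H) (\<lambda>_. cmat (M n))" for n
    using L1dist_resc_mult[OF T, of "r n / T" H] T by simp
  then have "\<forall>n. norm (L1dist T (resc (r n) H) (\<lambda>_. cmat (M n))) \<le> T * (distC H (r n / T) + 1 / Suc n)"
    using M(2) T by (simp add: L1dist_nonneg less_imp_le)
  moreover have "(\<lambda>n. T * (distC H (r n / T) + 1 / Suc n)) \<longlonglongrightarrow> 0"
    using tendsto_mult_left[OF tendsto_add[OF dist_r LIMSEQ_Suc[OF lim_inverse_n']], of T] by simp
  ultimately have "(\<lambda>n. L1dist T (resc (r n) H) (\<lambda>_. cmat (M n))) \<longlonglongrightarrow> 0"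
    by (rule Lim_null_comparison[OF always_eventually])
  then show thesis using that M(1) by blast
qed

lemma L1_close_constant_subseq:
  assumes H: "H \<in> Ham" and dist: "(distC H \<longlongrightarrow> 0) at_top" and T: "0 < T"
    and r: "filterlim r at_top sequentially"
  obtains M \<phi> where "M \<in> ConstHamVals" "strict_mono \<phi>"
    "(\<lambda>n. L1dist T (resc (r (\<phi> n)) H) (\<lambda>_. cmat M)) \<longlonglongrightarrow> 0"
proof -
  obtain X where X: "\<And>n. X n \<in> ConstHamVals"
    and lim: "(\<lambda>n. L1dist T (resc (r n) H) (\<lambda>_. cmat (X n))) \<longlonglongrightarrow> 0"
    using L1_close_constants[OF dist T r] by blast
  obtain M \<phi> where M: "M \<in> ConstHamVals" and \<phi>: "strict_mono \<phi>" and XM: "(X \<circ> \<phi>) \<longlonglongrightarrow> M"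
    using seq_compactE[OF compact_imp_seq_compact[OF compact_ConstHamVals]] X by metis
  have "(\<lambda>n. l1norm (cmat (X (\<phi> n)) - cmat M)) \<longlonglongrightarrow> l1norm (cmat M - cmat M)"
    using XM unfolding o_def by (intro tendsto_l1norm tendsto_diff tendsto_cmat tendsto_const)
  then have "(\<lambda>n. l1norm (cmat (X (\<phi> n)) - cmat M)) \<longlonglongrightarrow> 0"
    by (simp add: l1norm_def)
  with eventually_resc_Ham[OF H filterlim_compose[OF r filterlim_subseq[OF \<phi>]]] less_imp_le[OF T]
    LIMSEQ_subseq_LIMSEQ[OF lim \<phi>, unfolded o_def]
  have "(\<lambda>n. L1dist T (resc (r (\<phi> n)) H) (\<lambda>_. cmat M)) \<longlonglongrightarrow> 0"
    by (rule L1dist_const_tendsto_0_transfer)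
  then show thesis using that M \<phi> by blast
qed

lemma L1dist_const_tendsto_0_all_Ioo:
  assumes H: "H \<in> Ham" and dist: "(distC H \<longlongrightarrow> 0) at_top" and r: "filterlim r at_top sequentially"
    and lim1: "(\<lambda>n. L1dist 1 (resc (r n) H) (\<lambda>_. c)) \<longlonglongrightarrow> 0" and T: "0 < T"
  shows "(\<lambda>n. L1dist T (resc (r n) H) (\<lambda>_. c)) \<longlonglongrightarrow> 0"
proof -
  have F: "eventually (\<lambda>n. resc (r n) H \<in> Ham) sequentially" using H r by (rule eventually_resc_Ham)
  obtain X where limX: "(\<lambda>n. L1dist T (resc (r n) H) (\<lambda>_. cmat (X n))) \<longlonglongrightarrow> 0"
    using L1_close_constants[OF dist T r] by blast
  have "(\<lambda>n. l1norm (cmat (X n) - c)) \<longlonglongrightarrow> 0"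
  proof (rule l1norm_diff_tendsto_0_if_L1dist_tendsto_0[OF F])
    show "0 < min T 1" using T by simp
    show "(\<lambda>n. L1dist (min T 1) (resc (r n) H) (\<lambda>_. cmat (X n))) \<longlonglongrightarrow> 0"
      using F _ limX by (rule L1dist_const_tendsto_0_mono_interval) simp
    show "(\<lambda>n. L1dist (min T 1) (resc (r n) H) (\<lambda>_. c)) \<longlonglongrightarrow> 0"
      using F _ lim1 by (rule L1dist_const_tendsto_0_mono_interval) simp
  qed
  with F less_imp_le[OF T] limX show ?thesis by (rule L1dist_const_tendsto_0_transfer)
qed

section \<open>Weak convergence on initial intervals\<close>

lemma weak_conv_on_subseq:
  assumes conv: "weak_conv_on T Hs G" and \<phi>: "strict_mono \<phi>"
  shows "weak_conv_on T (\<lambda>n. Hs (\<phi> n)) G"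
  unfolding weak_conv_on_def
proof (intro allI impI)
  fix g :: "real \<Rightarrow> complex" and i j
  assume "g \<in> borel_measurable lborel \<and> bounded (range g)"
  with conv have "(\<lambda>n. LINT t:{0<..<T}|lborel. complex_of_real (Hs n t $ i $ j) * g t)
      \<longlonglongrightarrow> (LINT t:{0<..<T}|lborel. complex_of_real (G t $ i $ j) * g t)"
    unfolding weak_conv_on_def by blast
  from LIMSEQ_subseq_LIMSEQ[OF this \<phi>]
  show "(\<lambda>n. LINT t:{0<..<T}|lborel. complex_of_real (Hs (\<phi> n) t $ i $ j) * g t)
      \<longlonglongrightarrow> (LINT t:{0<..<T}|lborel. complex_of_real (G t $ i $ j) * g t)"
    by (simp add: o_def)
qed

lemma norm_set_integral_entry_diff_le:
  assumes F: "F \<in> Ham" and G: "G \<in> Ham"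
    and g: "g \<in> borel_measurable lborel" "\<And>t. norm (g t) \<le> B"
  shows "norm ((LINT t:{0<..<T}|lborel. complex_of_real (F t $ i $ j) * g t) -
      (LINT t:{0<..<T}|lborel. complex_of_real (G t $ i $ j) * g t))
    \<le> B * L1dist T F (\<lambda>t. cmat (G t))"
proof -
  have iF: "set_integrable lborel {0<..<T} (\<lambda>t. complex_of_real (F t $ i $ j) * g t)"
    and iG: "set_integrable lborel {0<..<T} (\<lambda>t. complex_of_real (G t $ i $ j) * g t)"
    using set_integrable_Ham_entry_mult[OF F g] set_integrable_Ham_entry_mult[OF G g] by auto
  then have iFG: "set_integrable lborel {0<..<T}
      (\<lambda>t. complex_of_real (F t $ i $ j) * g t - complex_of_real (G t $ i $ j) * g t)"
    by (rule set_integral_diff(1))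
  have B: "0 \<le> B" using order_trans[OF norm_ge_zero g(2)] .
  have "norm ((LINT t:{0<..<T}|lborel. complex_of_real (F t $ i $ j) * g t) -
      (LINT t:{0<..<T}|lborel. complex_of_real (G t $ i $ j) * g t))
    = norm (LINT t:{0<..<T}|lborel. complex_of_real (F t $ i $ j) * g t - complex_of_real (G t $ i $ j) * g t)"
    using iF iG by (simp add: set_integral_diff(2))
  also have "\<dots> \<le> (LINT t:{0<..<T}|lborel.
      norm (complex_of_real (F t $ i $ j) * g t - complex_of_real (G t $ i $ j) * g t))"
    using iFG by (rule set_integral_norm_bound)
  also have "\<dots> \<le> (LINT t:{0<..<T}|lborel. B * l1norm (cmat (F t) - cmat (G t)))"
  proof (rule set_integral_mono)
    show "set_integrable lborel {0<..<T}
        (\<lambda>t. norm (complex_of_real (F t $ i $ j) * g t - complex_of_real (G t $ i $ j) * g t))"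
      using iFG by (rule set_integrable_norm)
    show "set_integrable lborel {0<..<T} (\<lambda>t. B * l1norm (cmat (F t) - cmat (G t)))"
      using set_integrable_L1dist[OF F set_integrable_cmat_Ham[OF G]] by (rule set_integrable_mult_right)
  next
    fix t
    have "norm (complex_of_real (F t $ i $ j) * g t - complex_of_real (G t $ i $ j) * g t)
        = cmod ((cmat (F t) - cmat (G t)) $ i $ j) * norm (g t)"
      by (simp add: cmat_def left_diff_distrib[symmetric] norm_mult)
    also have "\<dots> \<le> l1norm (cmat (F t) - cmat (G t)) * B"
      using B g(2) by (intro mult_mono norm_nth_nth_le_l1norm) (auto simp: l1norm_nonneg)
    finally show "norm (complex_of_real (F t $ i $ j) * g t - complex_of_real (G t $ i $ j) * g t)
        \<le> B * l1norm (cmat (F t) - cmat (G t))"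
      by (simp add: mult.commute)
  qed
  also have "\<dots> = B * L1dist T F (\<lambda>t. cmat (G t))"
    unfolding L1dist_def by (rule set_integral_mult_right)
  finally show ?thesis .
qed

lemma weak_conv_on_if_L1dist_tendsto:
  assumes Hs: "eventually (\<lambda>n. Hs n \<in> Ham) sequentially" and G: "G \<in> Ham"
    and lim: "(\<lambda>n. L1dist T (Hs n) (\<lambda>t. cmat (G t))) \<longlonglongrightarrow> 0"
  shows "weak_conv_on T Hs G"
  unfolding weak_conv_on_def
proof (intro allI impI)
  fix g :: "real \<Rightarrow> complex" and i j
  assume "g \<in> borel_measurable lborel \<and> bounded (range g)"
  then obtain B where g: "g \<in> borel_measurable lborel" "\<And>t. norm (g t) \<le> B"
    by (auto simp: bounded_iff)
  let ?I = "\<lambda>F :: real \<Rightarrow> real^2^2. LINT t:{0<..<T}|lborel. complex_of_real (F t $ i $ j) * g t"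
  have "eventually (\<lambda>n. norm (?I (Hs n) - ?I G) \<le> B * L1dist T (Hs n) (\<lambda>t. cmat (G t))) sequentially"
    using Hs by (rule eventually_mono) (rule norm_set_integral_entry_diff_le[OF _ G g])
  moreover have "(\<lambda>n. B * L1dist T (Hs n) (\<lambda>t. cmat (G t))) \<longlonglongrightarrow> 0"
    using lim by (rule tendsto_mult_right_zero)
  ultimately have "(\<lambda>n. ?I (Hs n) - ?I G) \<longlonglongrightarrow> 0"
    by (rule Lim_null_comparison)
  then show "(\<lambda>n. ?I (Hs n)) \<longlonglongrightarrow> ?I G"
    by (simp only: LIM_zero_iff)
qed

lemma weak_conv_on_unique:
  assumes conv1: "weak_conv_on T Hs G1" and conv2: "weak_conv_on T Hs G2"
    and G1: "G1 \<in> Ham" and G2: "G2 \<in> Ham"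
  shows "AE t in lborel. t \<in> {0<..<T} \<longrightarrow> G1 t = G2 t"
proof -
  have entry: "AE t in lborel. t \<in> {0<..<T} \<longrightarrow> G1 t $ i $ j = G2 t $ i $ j" for i j
  proof -
    let ?d = "\<lambda>t. G1 t $ i $ j - G2 t $ i $ j"
    \<comment> \<open>testing against the sign of the difference turns equal limits into \<open>\<integral>|d| = 0\<close>\<close>
    define g where "g t = complex_of_real (sgn (?d t))" for t
    have "g \<in> borel_measurable lborel"
      using borel_measurable_Ham[OF G1] borel_measurable_Ham[OF G2] unfolding g_def by measurable
    moreover have "norm (g t) \<le> 1" for t by (simp add: g_def sgn_real_def)
    ultimately have g: "g \<in> borel_measurable lborel" "\<And>t. norm (g t) \<le> 1" by blast+
    then have "bounded (range g)" by (auto simp: bounded_iff)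
    then have "(LINT t:{0<..<T}|lborel. complex_of_real (G1 t $ i $ j) * g t) =
        (LINT t:{0<..<T}|lborel. complex_of_real (G2 t $ i $ j) * g t)"
      using conv1 conv2 g(1) unfolding weak_conv_on_def by (blast intro: LIMSEQ_unique)
    then have "(LINT t:{0<..<T}|lborel. complex_of_real (G1 t $ i $ j) * g t - complex_of_real (G2 t $ i $ j) * g t) = 0"
      using set_integrable_Ham_entry_mult[OF G1 g] set_integrable_Ham_entry_mult[OF G2 g]
      by (simp add: set_integral_diff(2))
    moreover have "complex_of_real (G1 t $ i $ j) * g t - complex_of_real (G2 t $ i $ j) * g t
        = complex_of_real \<bar>?d t\<bar>" for t
      by (simp add: g_def left_diff_distrib[symmetric] sgn_real_def abs_if)
    ultimately have "(LINT t:{0<..<T}|lborel. \<bar>?d t\<bar>) = 0"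
      by (simp add: set_integral_complex_of_real)
    moreover have "set_integrable lborel {0<..<T} (\<lambda>t. \<bar>?d t\<bar>)"
      by (intro set_integrable_abs set_integral_diff(1) set_integrable_Ham_entry G1 G2)
    ultimately show ?thesis
      by (auto dest!: set_integral_nonneg_eq_0_imp_AE elim!: eventually_mono)
  qed
  show ?thesis
    using entry[of 1 1] entry[of 1 2] entry[of 2 1] entry[of 2 2]
    by eventually_elim (auto simp: vec_eq_iff forall_2)
qed

section \<open>The two closures\<close>

lemma ClL1_const_iff:
  assumes T: "0 < T"
  shows "(\<lambda>_. c) \<in> ClL1 T H \<longleftrightarrow> (\<lambda>_. c) \<in> ClL1 1 H"
proof
  assume "(\<lambda>_. c) \<in> ClL1 T H"
  then obtain r where r: "filterlim r at_top sequentially"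
    and lim: "(\<lambda>n. L1dist T (resc (r n) H) (\<lambda>_. c)) \<longlonglongrightarrow> 0"
    unfolding ClL1_def by blast
  have "filterlim (\<lambda>n. r n / T) at_top sequentially"
    using filterlim_at_top_mult_tendsto_pos[OF tendsto_const _ r, of "inverse T"] T
    by (simp add: divide_inverse)
  moreover have "(\<lambda>n. L1dist 1 (resc (r n / T) H) (\<lambda>_. c)) \<longlonglongrightarrow> 0"
    using tendsto_divide_zero[OF lim, of T] L1dist_resc_mult[OF T, of "r _ / T" H c] T by simp
  ultimately show "(\<lambda>_. c) \<in> ClL1 1 H"
    unfolding ClL1_def using set_integrable_Ioo_const by blast
next
  assume "(\<lambda>_. c) \<in> ClL1 1 H"
  then obtain r where r: "filterlim r at_top sequentially"
    and lim: "(\<lambda>n. L1dist 1 (resc (r n) H) (\<lambda>_. c)) \<longlonglongrightarrow> 0"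
    unfolding ClL1_def by blast
  have "filterlim (\<lambda>n. T * r n) at_top sequentially"
    using filterlim_tendsto_pos_mult_at_top[OF tendsto_const T r] .
  moreover have "(\<lambda>n. L1dist T (resc (T * r n) H) (\<lambda>_. c)) \<longlonglongrightarrow> 0"
    using tendsto_mult_right_zero[OF lim, of T] by (simp add: L1dist_resc_mult[OF T])
  ultimately show "(\<lambda>_. c) \<in> ClL1 T H"
    unfolding ClL1_def using set_integrable_Ioo_const by blast
qed

lemma ClL1_cong_AE:
  assumes H: "H \<in> Ham" and G: "set_integrable lborel {0<..<T} G"
    and G': "set_integrable lborel {0<..<T} G'"
    and eq: "AE t in lborel. t \<in> {0<..<T} \<longrightarrow> G t = G' t"
  shows "G \<in> ClL1 T H \<longleftrightarrow> G' \<in> ClL1 T H"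
proof -
  have "(\<lambda>n. L1dist T (resc (r n) H) G) \<longlonglongrightarrow> 0 \<longleftrightarrow> (\<lambda>n. L1dist T (resc (r n) H) G') \<longlonglongrightarrow> 0"
    if r: "filterlim r at_top sequentially" for r
    using eventually_resc_Ham[OF H r]
    by (intro tendsto_cong) (auto elim!: eventually_mono intro: L1dist_cong_AE[OF _ G G' eq])
  then show ?thesis unfolding ClL1_def using G G' by blast
qed

lemma ClL1_iff_AE_const:
  assumes H: "H \<in> Ham" and dist: "(distC H \<longlongrightarrow> 0) at_top" and T: "0 < T"
  shows "G \<in> ClL1 T H \<longleftrightarrow> set_integrable lborel {0<..<T} G \<and>
    (\<exists>M\<in>ConstHamVals. (\<lambda>_. cmat M) \<in> ClL1 1 H \<and> (AE t in lborel. t \<in> {0<..<T} \<longrightarrow> G t = cmat M))"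
proof
  assume "G \<in> ClL1 T H"
  then obtain r where G: "set_integrable lborel {0<..<T} G" and r: "filterlim r at_top sequentially"
    and lim: "(\<lambda>n. L1dist T (resc (r n) H) G) \<longlonglongrightarrow> 0"
    unfolding ClL1_def by blast
  obtain M \<phi> where M: "M \<in> ConstHamVals" and \<phi>: "strict_mono \<phi>"
    and limM: "(\<lambda>n. L1dist T (resc (r (\<phi> n)) H) (\<lambda>_. cmat M)) \<longlonglongrightarrow> 0"
    using L1_close_constant_subseq[OF H dist T r] .
  have r\<phi>: "filterlim (\<lambda>n. r (\<phi> n)) at_top sequentially"
    using filterlim_compose[OF r filterlim_subseq[OF \<phi>]] .
  have "AE t in lborel. t \<in> {0<..<T} \<longrightarrow> G t = cmat M"
    using LIMSEQ_subseq_LIMSEQ[OF lim \<phi>] unfolding o_def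
    by (intro L1dist_limits_AE_eq[OF eventually_resc_Ham[OF H r\<phi>] G set_integrable_Ioo_const _ limM])
  moreover have "(\<lambda>_. cmat M) \<in> ClL1 T H"
    unfolding ClL1_def using r\<phi> limM set_integrable_Ioo_const by blast
  ultimately show "set_integrable lborel {0<..<T} G \<and>
    (\<exists>M\<in>ConstHamVals. (\<lambda>_. cmat M) \<in> ClL1 1 H \<and> (AE t in lborel. t \<in> {0<..<T} \<longrightarrow> G t = cmat M))"
    using G M ClL1_const_iff[OF T] by blast
next
  assume "set_integrable lborel {0<..<T} G \<and>
    (\<exists>M\<in>ConstHamVals. (\<lambda>_. cmat M) \<in> ClL1 1 H \<and> (AE t in lborel. t \<in> {0<..<T} \<longrightarrow> G t = cmat M))"
  then obtain M where G: "set_integrable lborel {0<..<T} G" and M: "(\<lambda>_. cmat M) \<in> ClL1 1 H"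
    and eq: "AE t in lborel. t \<in> {0<..<T} \<longrightarrow> G t = cmat M"
    by blast
  show "G \<in> ClL1 T H"
    using M ClL1_const_iff[OF T] ClL1_cong_AE[OF H G set_integrable_Ioo_const eq] by blast
qed

lemma AE_Ioo_imp:
  fixes T :: real
  assumes "0 < T" "AE t in lborel. t \<in> {0<..<T} \<longrightarrow> P"
  shows P
proof (rule ccontr)
  assume "\<not> P"
  then have "AE t in lborel. t \<notin> {0<..<T}" using assms(2) by (auto elim: eventually_mono)
  then have "{0<..<T} \<in> null_sets lborel" by (subst AE_iff_null_sets) auto
  then show False using assms(1) by (simp add: null_sets_def)
qed

lemma AE_pos_if_AE_Ioo:
  fixes P :: "real \<Rightarrow> bool"
  assumes "\<And>T. 0 < T \<Longrightarrow> AE t in lborel. t \<in> {0<..<T} \<longrightarrow> P t"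
  shows "AE t in lborel. 0 < t \<longrightarrow> P t"
proof -
  have "AE t in lborel. \<forall>k::nat. t \<in> {0<..<real (Suc k)} \<longrightarrow> P t"
    using assms by (subst AE_all_countable) auto
  then show ?thesis
  proof (rule eventually_mono, intro impI)
    fix t :: real assume "\<forall>k. t \<in> {0<..<real (Suc k)} \<longrightarrow> P t" "0 < t"
    moreover obtain k where "t < real k" using reals_Archimedean2 by blast
    ultimately show "P t" by (metis greaterThanLessThan_iff less_Suc_eq of_nat_less_iff order.strict_trans)
  qed
qed

lemma ClA_imp_AE_const_on_Ioo:
  assumes H: "H \<in> Ham" and dist: "(distC H \<longlongrightarrow> 0) at_top" and G: "G \<in> Ham"
    and r: "filterlim r at_top sequentially" and conv: "T_conv (\<lambda>n. resc (r n) H) G"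
    and T: "0 < T"
  obtains M where "M \<in> ConstHamVals" "(\<lambda>_. cmat M) \<in> ClL1 T H"
    "AE t in lborel. t \<in> {0<..<T} \<longrightarrow> G t = M"
proof -
  obtain M \<phi> where M: "M \<in> ConstHamVals" and \<phi>: "strict_mono \<phi>"
    and limM: "(\<lambda>n. L1dist T (resc (r (\<phi> n)) H) (\<lambda>_. cmat M)) \<longlonglongrightarrow> 0"
    using L1_close_constant_subseq[OF H dist T r] .
  have r\<phi>: "filterlim (\<lambda>n. r (\<phi> n)) at_top sequentially"
    using filterlim_compose[OF r filterlim_subseq[OF \<phi>]] .
  have "weak_conv_on T (\<lambda>n. resc (r n) H) G" using conv T unfolding T_conv_def by blast
  then have "weak_conv_on T (\<lambda>n. resc (r (\<phi> n)) H) G" using \<phi> by (rule weak_conv_on_subseq)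
  moreover have "weak_conv_on T (\<lambda>n. resc (r (\<phi> n)) H) (\<lambda>_. M)"
    using eventually_resc_Ham[OF H r\<phi>] const_Ham[OF M] limM by (rule weak_conv_on_if_L1dist_tendsto)
  ultimately have "AE t in lborel. t \<in> {0<..<T} \<longrightarrow> G t = M"
    using G const_Ham[OF M] by (rule weak_conv_on_unique)
  moreover have "(\<lambda>_. cmat M) \<in> ClL1 T H"
    unfolding ClL1_def using r\<phi> limM set_integrable_Ioo_const by blast
  ultimately show thesis using that M by blast
qed

lemma ClA_if_AE_const:
  assumes H: "H \<in> Ham" and dist: "(distC H \<longlongrightarrow> 0) at_top" and G: "G \<in> Ham"
    and M: "(\<lambda>_. cmat M) \<in> ClL1 1 H" and eq: "AE t in lborel. 0 < t \<longrightarrow> G t = M"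
  shows "G \<in> ClA H"
proof -
  obtain r where r: "filterlim r at_top sequentially"
    and lim1: "(\<lambda>n. L1dist 1 (resc (r n) H) (\<lambda>_. cmat M)) \<longlonglongrightarrow> 0"
    using M unfolding ClL1_def by blast
  have "weak_conv_on T (\<lambda>n. resc (r n) H) G" if T: "0 < T" for T
  proof (rule weak_conv_on_if_L1dist_tendsto[OF eventually_resc_Ham[OF H r] G])
    have eqT: "AE t in lborel. t \<in> {0<..<T} \<longrightarrow> cmat M = cmat (G t)"
      using eq by eventually_elim auto
    have "eventually (\<lambda>n. L1dist T (resc (r n) H) (\<lambda>_. cmat M) =
        L1dist T (resc (r n) H) (\<lambda>t. cmat (G t))) sequentially"
      using eventually_resc_Ham[OF H r]
      by (rule eventually_mono)
        (rule L1dist_cong_AE[OF _ set_integrable_Ioo_const set_integrable_cmat_Ham[OF G] eqT])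
    then show "(\<lambda>n. L1dist T (resc (r n) H) (\<lambda>t. cmat (G t))) \<longlonglongrightarrow> 0"
      by (rule Lim_transform_eventually[OF L1dist_const_tendsto_0_all_Ioo[OF H dist r lim1 T]])
  qed
  then show ?thesis unfolding ClA_def T_conv_def using G r by blast
qed

lemma ClA_iff_AE_const:
  assumes H: "H \<in> Ham" and dist: "(distC H \<longlongrightarrow> 0) at_top" and G: "G \<in> Ham"
  shows "G \<in> ClA H \<longleftrightarrow>
    (\<exists>M\<in>ConstHamVals. (\<lambda>_. cmat M) \<in> ClL1 1 H \<and> (AE t in lborel. 0 < t \<longrightarrow> G t = M))"
proof
  assume "G \<in> ClA H"
  then obtain r where r: "filterlim r at_top sequentially" and conv: "T_conv (\<lambda>n. resc (r n) H) G"
    unfolding ClA_def by blast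
  obtain M where M: "M \<in> ConstHamVals" "(\<lambda>_. cmat M) \<in> ClL1 1 H"
    and eq1: "AE t in lborel. t \<in> {0<..<1} \<longrightarrow> G t = M"
    using ClA_imp_AE_const_on_Ioo[OF H dist G r conv zero_less_one] .
  have "AE t in lborel. t \<in> {0<..<T} \<longrightarrow> G t = M" if T: "0 < T" for T
  proof -
    obtain M' where eqT: "AE t in lborel. t \<in> {0<..<T} \<longrightarrow> G t = M'"
      using ClA_imp_AE_const_on_Ioo[OF H dist G r conv T] by blast
    have "AE t in lborel. t \<in> {0<..<min T 1} \<longrightarrow> M' = M"
      using eqT eq1 by eventually_elim auto
    from AE_Ioo_imp[OF _ this] T have "M' = M" by simp
    then show ?thesis using eqT by simp
  qed
  then have "AE t in lborel. 0 < t \<longrightarrow> G t = M" by (rule AE_pos_if_AE_Ioo)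
  with M show "\<exists>M\<in>ConstHamVals. (\<lambda>_. cmat M) \<in> ClL1 1 H \<and> (AE t in lborel. 0 < t \<longrightarrow> G t = M)"
    by blast
next
  assume "\<exists>M\<in>ConstHamVals. (\<lambda>_. cmat M) \<in> ClL1 1 H \<and> (AE t in lborel. 0 < t \<longrightarrow> G t = M)"
  then show "G \<in> ClA H" using ClA_if_AE_const[OF H dist G] by blast
qed

theorem mainTheorem12:
  fixes H :: "real \<Rightarrow> real^2^2"
  assumes "H \<in> Ham"
    and "(distC H \<longlongrightarrow> 0) at_top"
  defines "K \<equiv> {\<xi> \<in> ClUHP. (\<lambda>_. cmat (Theta \<xi>)) \<in> ClL1 1 H}"
  shows "(\<forall>T>0. \<forall>G. G \<in> ClL1 T H \<longleftrightarrow>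
            (set_integrable lborel {0<..<T} G \<and>
             (\<exists>\<xi>\<in>K. AE t in lborel. t \<in> {0<..<T} \<longrightarrow> G t = cmat (Theta \<xi>)))) \<and>
         (\<forall>G \<in> Ham. G \<in> ClA H \<longleftrightarrow>
            (\<exists>\<xi>\<in>K. AE t in lborel. 0 < t \<longrightarrow> G t = Theta \<xi>))"
proof -
  have K: "(\<exists>\<xi>\<in>K. P (Theta \<xi>)) \<longleftrightarrow> (\<exists>M\<in>ConstHamVals. (\<lambda>_. cmat M) \<in> ClL1 1 H \<and> P M)" for P
    unfolding K_def Theta_image[symmetric] by blast
  show ?thesis
  proof (intro conjI allI impI ballI)
    fix T :: real and G assume T: "0 < T"
    show "G \<in> ClL1 T H \<longleftrightarrow> (set_integrable lborel {0<..<T} G \<and>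
        (\<exists>\<xi>\<in>K. AE t in lborel. t \<in> {0<..<T} \<longrightarrow> G t = cmat (Theta \<xi>)))"
      by (simp only: ClL1_iff_AE_const[OF assms(1,2) T]
          K[of "\<lambda>M. AE t in lborel. t \<in> {0<..<T} \<longrightarrow> G t = cmat M"])
  next
    fix G assume G: "G \<in> Ham"
    show "G \<in> ClA H \<longleftrightarrow> (\<exists>\<xi>\<in>K. AE t in lborel. 0 < t \<longrightarrow> G t = Theta \<xi>)"
      by (simp only: ClA_iff_AE_const[OF assms(1,2) G] K[of "\<lambda>M. AE t in lborel. 0 < t \<longrightarrow> G t = M"])
  qed
qed

end
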